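(* Let $f_1,f_2,g_1,g_2:\mathbb R^n\to\mathbb R$ be convex and positively one-homogeneous with $g_1(x)-g_2(x)\ge0$ for all $x$, and let $r(x)=\frac{f_1(x)-f_2(x)}{g_1(x)-g_2(x)}$. Consider the generalized RatioDCA iteration: start from $x_0$ with $\|x_0\|_2=1$, $\lambda_0=r(x_0)$; given $x_k$ and $\lambda_k=r(x_k)$: if $\lambda_k\ge0$, pick $F_2\in\partial f_2(x_k)$, $G_1\in\partial g_1(x_k)$ and let $x_{k+1}$ be a minimizer over $\{\xi:\|\xi\|_2\le1\}$ of $f_1(\xi)-\langle\xi,F_2\rangle+\lambda_k\big(g_2(\xi)-\langle\xi,G_1\rangle\big)$; if $\lambda_k<0$, pick $F_2\in\partial f_2(x_k)$, $G_2\in\partial g_2(x_k)$ and let $x_{k+1}$ be a minimizer over $\{\xi:\|\xi\|_2\le1\}$ of $g_1(\xi)-\langle\xi,G_2\rangle+\frac1{\lambda_k}\big(\langle\xi,F_2\rangle-f_1(\xi)\big)$; then set $\lambda_{k+1}=r(x_{k+1})$. Assume the iteration is well defined, i.e. $g_1(x_k)-g_2(x_k)>0$ for all $k$. Then for each $k$, either $\lambda_{k+1}<\lambda_k$, or $\lambda_{k+1}=\lambda_k$ (so the method terminates) and $\lambda_{k+1}$ is a nonlinear eigenvalue of $r$ with nonlinear eigenvector $x_{k+1}$.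
   Context: $\partial$ denotes the subdifferential of a convex function; $\langle\cdot,\cdot\rangle$ the Euclidean inner product. A real $\lambda$ is a nonlinear eigenvalue of $r$ with nonlinear eigenvector $x$ if $0\in\partial f_1(x)-\partial f_2(x)-\lambda\big(\partial g_1(x)-\partial g_2(x)\big)$ (Minkowski sums/differences of sets). The method is stopped when the relative change of $\lambda_k$ falls below a tolerance; in particular it terminates when $\lambda_{k+1}=\lambda_k$. *)

theory Defs
  imports "HOL-Analysis.Analysis"
begin

definition subdiff :: "('a::real_inner \<Rightarrow> real) \<Rightarrow> 'a \<Rightarrow> 'a set" where
  "subdiff f x = {s. \<forall>y. f y \<ge> f x + inner s (y - x)}"

definition pos_homogeneous :: "('a::real_vector \<Rightarrow> real) \<Rightarrow> bool" where
  "pos_homogeneous f \<longleftrightarrow> (\<forall>x. \<forall>t::real. t \<ge> 0 \<longrightarrow> f (t *\<^sub>R x) = t * f x)"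

definition ratio :: "('a \<Rightarrow> real) \<Rightarrow> ('a \<Rightarrow> real) \<Rightarrow> ('a \<Rightarrow> real) \<Rightarrow> ('a \<Rightarrow> real) \<Rightarrow> 'a \<Rightarrow> real" where
  "ratio f1 f2 g1 g2 x = (f1 x - f2 x) / (g1 x - g2 x)"

text \<open>Nonlinear eigenvalue: 0 \<in> df1(x) - df2(x) - lam (dg1(x) - dg2(x)), Minkowski sums unfolded.\<close>
definition nonlinear_eigen ::
  "('a::real_inner \<Rightarrow> real) \<Rightarrow> ('a \<Rightarrow> real) \<Rightarrow> ('a \<Rightarrow> real) \<Rightarrow> ('a \<Rightarrow> real) \<Rightarrow> real \<Rightarrow> 'a \<Rightarrow> bool" where
  "nonlinear_eigen f1 f2 g1 g2 lam x \<longleftrightarrow>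
     (\<exists>a\<in>subdiff f1 x. \<exists>b\<in>subdiff f2 x. \<exists>c\<in>subdiff g1 x. \<exists>d\<in>subdiff g2 x.
        a - b - lam *\<^sub>R (c - d) = 0)"

end

(* For lambda_k >= 0 the subproblem minimises, over the unit ball,
     Phi(xi) = f1 xi - <xi, F> + mu (h xi - <xi, H>)
   with mu = lambda_k, h = g2 and F, H subgradients of f2, g1 at x_k; for lambda_k < 0 it is the same
   problem with mu = -lambda_k and g1, g2 swapped, divided by mu.  A subgradient of a positively
   homogeneous function is a linear minorant that is exact at the point, so Phi dominates
   f1 - f2 - lambda_k (g1 - g2) everywhere and agrees with it, i.e. vanishes, at x_k.  Hence the
   minimiser x_(k+1) satisfies f1 - f2 <= lambda_k (g1 - g2), which is lambda_(k+1) <= lambda_k.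
   In the equality case all gaps vanish, x_(k+1) is by homogeneity a global minimiser of Phi, so
   F + mu H is a subgradient of f1 + mu h there; the sum rule, obtained by separating the epigraph
   of f1 from the hypograph of <F + mu H, .> - mu h, splits it into subgradients of f1 and h, which
   is the eigenvalue equation. *)

theory Submission
  imports Defs
begin

lemma pos_homogeneous_zero: "pos_homogeneous p \<Longrightarrow> p 0 = 0"
  unfolding pos_homogeneous_def by (metis mult_zero_left order_refl scaleR_zero_left)

lemma pos_homogeneous_nonneg_if_nonneg_on_ball:
  fixes p :: "'a::real_normed_vector \<Rightarrow> real"
  assumes hom: "pos_homogeneous p" and ball: "\<And>\<xi>. norm \<xi> \<le> 1 \<Longrightarrow> 0 \<le> p \<xi>"
  shows "0 \<le> p z"
proof (cases "z = 0")
  case True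
  then show ?thesis using pos_homogeneous_zero[OF hom] by simp
next
  case False
  define u where "u = (1 / norm z) *\<^sub>R z"
  have "z = norm z *\<^sub>R u" using False by (simp add: u_def)
  then have "p z = norm z * p u" using hom unfolding pos_homogeneous_def by (metis norm_ge_zero)
  moreover have "0 \<le> p u" using False by (intro ball) (simp add: u_def)
  ultimately show ?thesis by simp
qed

lemma subdiff_pos_homogeneous_iff:
  assumes hom: "pos_homogeneous p"
  shows "s \<in> subdiff p y \<longleftrightarrow> (\<forall>z. inner s z \<le> p z) \<and> inner s y = p y"
proof
  assume s: "s \<in> subdiff p y"
  have "p 0 \<ge> p y + inner s (0 - y)" "p (2 *\<^sub>R y) \<ge> p y + inner s (2 *\<^sub>R y - y)"
    using s unfolding subdiff_def by blast+
  moreover have "p 0 = 0" "p (2 *\<^sub>R y) = 2 * p y"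
    using hom pos_homogeneous_zero[OF hom] unfolding pos_homogeneous_def by simp_all
  ultimately have "inner s y = p y" by (simp add: algebra_simps)
  moreover have "inner s z \<le> p z" for z
    using s \<open>inner s y = p y\<close> unfolding subdiff_def by (force simp: inner_diff_right)
  ultimately show "(\<forall>z. inner s z \<le> p z) \<and> inner s y = p y" by blast
qed (auto simp: subdiff_def inner_diff_right)

lemma convex_strict_hypograph:
  assumes "concave_on C q"
  shows "convex {(z, t). z \<in> C \<and> t < q z}"
  unfolding convex_def
proof (clarsimp)
  fix z1 t1 z2 t2 and u v :: real
  assume z: "z1 \<in> C" "z2 \<in> C" and t: "t1 < q z1" "t2 < q z2"
    and uv: "0 \<le> u" "0 \<le> v" "u + v = 1"
  have "u *\<^sub>R z1 + v *\<^sub>R z2 \<in> C"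
    using assms z uv unfolding concave_on_iff convex_def by blast
  moreover have "u * t1 + v * t2 < u * q z1 + v * q z2"
  proof (cases "u = 0")
    case True
    then show ?thesis using t uv by simp
  next
    case False
    then show ?thesis
      using t uv by (intro add_less_le_mono mult_strict_left_mono mult_left_mono) auto
  qed
  moreover have "u * q z1 + v * q z2 \<le> q (u *\<^sub>R z1 + v *\<^sub>R z2)"
    using assms z uv unfolding concave_on_iff by blast
  ultimately show "u *\<^sub>R z1 + v *\<^sub>R z2 \<in> C \<and> u * t1 + v * t2 < q (u *\<^sub>R z1 + v *\<^sub>R z2)"
    by simp
qed

lemma concave_on_inner_diff:
  assumes "convex_on UNIV g"
  shows "concave_on UNIV (\<lambda>z. inner s z - g z)"
  by (intro concave_on_diff assms) (simp add: concave_on_iff inner_add_right)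

lemma homogeneous_convex_sandwich:
  fixes p q :: "'a::euclidean_space \<Rightarrow> real"
  assumes p: "convex_on UNIV p" "pos_homogeneous p"
    and q: "concave_on C q" "C \<noteq> {}"
    and le: "\<And>z. z \<in> C \<Longrightarrow> q z \<le> p z"
  shows "\<exists>a. (\<forall>z. inner a z \<le> p z) \<and> (\<forall>z\<in>C. q z \<le> inner a z)"
proof -
  define T where "T = {(z, t). z \<in> C \<and> t < q z}"
  have "epigraph UNIV p \<noteq> {}" by (auto simp: epigraph_def)
  moreover obtain z0 where "z0 \<in> C" using q(2) by blast
  then have "(z0, q z0 - 1) \<in> T" by (simp add: T_def)
  then have "T \<noteq> {}" by blast
  moreover have "epigraph UNIV p \<inter> T = {}" using le by (force simp: T_def epigraph_def)
  ultimately obtain ab b where nonzero: "ab \<noteq> 0"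
      and sep_epi: "\<forall>x\<in>epigraph UNIV p. inner ab x \<le> b" and sep_T: "\<forall>x\<in>T. b \<le> inner ab x"
    using separating_hyperplane_sets[OF convex_epigraphI[OF p(1)] convex_strict_hypograph[OF q(1)]]
    unfolding T_def by blast
  obtain w c where ab: "ab = (w, c)" by fastforce
  have epi: "inner w z + c * t \<le> b" if "p z \<le> t" for z t
    using sep_epi[rule_format, of "(z, t)"] that by (simp add: mem_epigraph ab)
  have hyp: "b \<le> inner w z + c * t" if "z \<in> C" "t < q z" for z t
    using sep_T that by (auto simp: T_def ab)
  have "0 \<le> b" using epi[of 0 0] pos_homogeneous_zero[OF p(2)] by simp
  text \<open>The epigraph of p is a cone, so the separating functional is nonpositive on all of it.\<close>
  have cone: "inner w z + c * t \<le> 0" if "p z \<le> t" for z t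
  proof (rule ccontr)
    assume pos: "\<not> ?thesis"
    define s where "s = (b + 1) / (inner w z + c * t)"
    have "0 < s" using pos \<open>0 \<le> b\<close> by (simp add: s_def)
    then have "p (s *\<^sub>R z) \<le> s * t" using p(2) that by (simp add: pos_homogeneous_def)
    then have "inner w (s *\<^sub>R z) + c * (s * t) \<le> b" by (rule epi)
    then have "s * (inner w z + c * t) \<le> b" by (simp add: algebra_simps)
    moreover have "s * (inner w z + c * t) = b + 1" using pos by (simp add: s_def)
    ultimately show False by simp
  qed
  have "c < 0"
  proof -
    have "c \<le> 0" using cone[of 0 1] pos_homogeneous_zero[OF p(2)] by simp
    moreover have "c \<noteq> 0"
    proof
      assume "c = 0"
      then have "inner w w \<le> 0" using cone[of w "p w"] by simp
      then have "w = 0" by (meson inner_gt_zero_iff not_less)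
      then show False using nonzero \<open>c = 0\<close> by (simp add: ab zero_prod_def)
    qed
    ultimately show ?thesis by simp
  qed
  then obtain m where m: "0 < m" "c = - m" by (metis neg_0_less_iff_less minus_minus)
  define a where "a = (1 / m) *\<^sub>R w"
  have inner_a: "inner a z = inner w z / m" for z by (simp add: a_def)
  have "inner a z \<le> p z" for z
    using cone[of z "p z"] m by (simp add: inner_a pos_divide_le_eq algebra_simps)
  moreover have "q z \<le> inner a z" if "z \<in> C" for z
  proof (rule dense_le)
    fix t assume "t < q z"
    then have "b \<le> inner w z + c * t" using hyp that by blast
    then show "t \<le> inner a z"
      using \<open>0 \<le> b\<close> m by (simp add: inner_a pos_le_divide_eq algebra_simps)
  qed
  ultimately show ?thesis by blast
qed

lemma subdiff_nonempty:
  fixes p :: "'a::euclidean_space \<Rightarrow> real"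
  assumes "convex_on UNIV p" "pos_homogeneous p"
  shows "subdiff p y \<noteq> {}"
proof -
  have "concave_on {y} (\<lambda>_. p y)" by (simp add: concave_on_def convex_on_const)
  then obtain a where "\<forall>z. inner a z \<le> p z" "p y \<le> inner a y"
    using homogeneous_convex_sandwich[OF assms, of "{y}" "\<lambda>_. p y"] by auto
  then have "a \<in> subdiff p y" by (simp add: subdiff_pos_homogeneous_iff[OF assms(2)] antisym)
  then show ?thesis by blast
qed

lemma subdiff_add_scaled_split:
  fixes f g :: "'a::euclidean_space \<Rightarrow> real"
  assumes f: "convex_on UNIV f" "pos_homogeneous f"
    and g: "convex_on UNIV g" "pos_homogeneous g"
    and "0 \<le> \<mu>" and s: "s \<in> subdiff (\<lambda>z. f z + \<mu> * g z) y"
  shows "\<exists>a\<in>subdiff f y. \<exists>d\<in>subdiff g y. s = a + \<mu> *\<^sub>R d"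
proof (cases "\<mu> = 0")
  case True
  then show ?thesis using s subdiff_nonempty[OF g] by auto
next
  case False
  then have "0 < \<mu>" using \<open>0 \<le> \<mu>\<close> by simp
  have "pos_homogeneous (\<lambda>z. f z + \<mu> * g z)"
    using f(2) g(2) by (simp add: pos_homogeneous_def algebra_simps)
  then have s_le: "inner s z \<le> f z + \<mu> * g z" and s_eq: "inner s y = f y + \<mu> * g y" for z
    using s by (simp_all add: subdiff_pos_homogeneous_iff)
  have "concave_on UNIV (\<lambda>z. inner s z - \<mu> * g z)"
    using \<open>0 \<le> \<mu>\<close> g(1) by (intro concave_on_inner_diff convex_on_cmul)
  moreover have "inner s z - \<mu> * g z \<le> f z" for z using s_le[of z] by simp
  ultimately obtain a where a_le: "\<forall>z. inner a z \<le> f z"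
      and a_ge: "\<forall>z. inner s z - \<mu> * g z \<le> inner a z"
    using homogeneous_convex_sandwich[OF f, of UNIV "\<lambda>z. inner s z - \<mu> * g z"] by auto
  define d where "d = (1 / \<mu>) *\<^sub>R (s - a)"
  have inner_d: "inner d z = (inner s z - inner a z) / \<mu>" for z
    by (simp add: d_def inner_diff_left)
  have d_le: "inner d z \<le> g z" for z
    using a_ge \<open>0 < \<mu>\<close> by (simp add: inner_d pos_divide_le_eq algebra_simps)
  have "inner a y = f y" "inner d y = g y"
    using a_le a_ge d_le[of y] s_eq \<open>0 < \<mu>\<close> by (auto simp: inner_d field_simps intro: antisym)
  then have "a \<in> subdiff f y" "d \<in> subdiff g y"
    using a_le d_le by (simp_all add: subdiff_pos_homogeneous_iff f(2) g(2))
  moreover have "s = a + \<mu> *\<^sub>R d" using \<open>0 < \<mu>\<close> by (simp add: d_def)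
  ultimately show ?thesis by blast
qed

definition dca_objective ::
  "('a::real_inner \<Rightarrow> real) \<Rightarrow> ('a \<Rightarrow> real) \<Rightarrow> 'a \<Rightarrow> 'a \<Rightarrow> real \<Rightarrow> 'a \<Rightarrow> real" where
  "dca_objective f h F H \<mu> \<xi> = f \<xi> - inner \<xi> F + \<mu> * (h \<xi> - inner \<xi> H)"

lemma dca_objective_eq_gaps:
  "dca_objective f h F H \<mu> z =
     (f z - g z - \<mu> * (k z - h z)) + (g z - inner z F) + \<mu> * (k z - inner z H)"
  by (simp add: dca_objective_def algebra_simps)

lemma pos_homogeneous_dca_objective:
  "pos_homogeneous f \<Longrightarrow> pos_homogeneous h \<Longrightarrow> pos_homogeneous (dca_objective f h F H \<mu>)"
  by (simp add: pos_homogeneous_def dca_objective_def algebra_simps)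

lemma dca_step:
  fixes f1 f2 h k :: "'a::euclidean_space \<Rightarrow> real"
  assumes conv: "convex_on UNIV f1" "convex_on UNIV h" "convex_on UNIV k"
    and hom: "pos_homogeneous f1" "pos_homogeneous f2" "pos_homogeneous h" "pos_homogeneous k"
    and "0 \<le> \<mu>" and F: "F \<in> subdiff f2 X" and H: "H \<in> subdiff k X"
    and X: "norm X \<le> 1" "f1 X - f2 X = \<mu> * (k X - h X)"
    and min: "\<And>\<xi>. norm \<xi> \<le> 1 \<Longrightarrow> dca_objective f1 h F H \<mu> y \<le> dca_objective f1 h F H \<mu> \<xi>"
  shows "f1 y - f2 y \<le> \<mu> * (k y - h y)"
    and "f1 y - f2 y = \<mu> * (k y - h y) \<Longrightarrow>
      \<exists>a\<in>subdiff f1 y. \<exists>b\<in>subdiff f2 y. \<exists>c\<in>subdiff k y. \<exists>d\<in>subdiff h y.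
        a - b - \<mu> *\<^sub>R (c - d) = 0"
proof -
  let ?\<Phi> = "dca_objective f1 h F H \<mu>"
  have F_le: "\<And>z. inner z F \<le> f2 z" and F_X: "inner X F = f2 X"
    using F by (simp_all add: subdiff_pos_homogeneous_iff[OF hom(2)] inner_commute)
  have H_le: "\<And>z. inner z H \<le> k z" and H_X: "inner X H = k X"
    using H by (simp_all add: subdiff_pos_homogeneous_iff[OF hom(4)] inner_commute)
  have "?\<Phi> X = 0"
    using X(2) F_X H_X by (simp add: dca_objective_eq_gaps[where g = f2 and k = k])
  then have \<Phi>_y: "?\<Phi> y \<le> 0" using min X(1) by fastforce
  have gaps: "0 \<le> f2 y - inner y F" "0 \<le> \<mu> * (k y - inner y H)"
    using F_le H_le \<open>0 \<le> \<mu>\<close> by simp_all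
  note decomp = dca_objective_eq_gaps[of f1 h F H \<mu> y f2 k]
  show "f1 y - f2 y \<le> \<mu> * (k y - h y)" using decomp \<Phi>_y gaps by linarith
  assume "f1 y - f2 y = \<mu> * (k y - h y)"
  then have \<Phi>_y0: "?\<Phi> y = 0" and F_y: "inner y F = f2 y" and H_y: "\<mu> * (k y - inner y H) = 0"
    using decomp \<Phi>_y gaps by linarith+
  have "F \<in> subdiff f2 y"
    using F_le F_y by (simp add: subdiff_pos_homogeneous_iff[OF hom(2)] inner_commute)
  obtain c where "c \<in> subdiff k y" and c_eq: "\<mu> *\<^sub>R c = \<mu> *\<^sub>R H"
  proof (cases "\<mu> = 0")
    case True
    then show ?thesis using that subdiff_nonempty[OF conv(3) hom(4)] by auto
  next
    case False
    then have "H \<in> subdiff k y"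
      using H_le H_y by (simp add: subdiff_pos_homogeneous_iff[OF hom(4)] inner_commute)
    then show ?thesis using that by blast
  qed
  text \<open>On the unit ball y is a minimiser with value 0; homogeneity makes it a global one.\<close>
  have "pos_homogeneous ?\<Phi>" using hom(1,3) by (rule pos_homogeneous_dca_objective)
  then have "0 \<le> ?\<Phi> z" for z
    by (rule pos_homogeneous_nonneg_if_nonneg_on_ball) (use min \<Phi>_y0 in auto)
  then have "F + \<mu> *\<^sub>R H \<in> subdiff (\<lambda>z. f1 z + \<mu> * h z) y"
    using \<Phi>_y0 by (simp add: subdiff_def dca_objective_def inner_add_left inner_commute[of F]
        inner_commute[of H] algebra_simps)
  then obtain a d where "a \<in> subdiff f1 y" "d \<in> subdiff h y"
    and sum_eq: "F + \<mu> *\<^sub>R H = a + \<mu> *\<^sub>R d"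
    using subdiff_add_scaled_split[OF conv(1) hom(1) conv(2) hom(3) \<open>0 \<le> \<mu>\<close>] by blast
  have "a - F - \<mu> *\<^sub>R (c - d) = (a + \<mu> *\<^sub>R d) - (F + \<mu> *\<^sub>R c)"
    by (simp add: algebra_simps)
  then have "a - F - \<mu> *\<^sub>R (c - d) = 0" using c_eq sum_eq by simp
  then show "\<exists>a\<in>subdiff f1 y. \<exists>b\<in>subdiff f2 y. \<exists>c\<in>subdiff k y. \<exists>d\<in>subdiff h y.
      a - b - \<mu> *\<^sub>R (c - d) = 0"
    using \<open>a \<in> subdiff f1 y\<close> \<open>F \<in> subdiff f2 y\<close> \<open>c \<in> subdiff k y\<close> \<open>d \<in> subdiff h y\<close>
    by blast
qed

lemma ratio_dca_step_nonneg:
  fixes f1 f2 g1 g2 :: "'a::euclidean_space \<Rightarrow> real"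
  assumes conv: "convex_on UNIV f1" "convex_on UNIV g1" "convex_on UNIV g2"
    and hom: "pos_homogeneous f1" "pos_homogeneous f2" "pos_homogeneous g1" "pos_homogeneous g2"
    and "0 \<le> l" and F: "F \<in> subdiff f2 X" and G: "G \<in> subdiff g1 X"
    and X: "norm X \<le> 1" "f1 X - f2 X = l * (g1 X - g2 X)"
    and min: "\<forall>\<xi>. norm \<xi> \<le> 1 \<longrightarrow>
      f1 y - inner y F + l * (g2 y - inner y G)
        \<le> f1 \<xi> - inner \<xi> F + l * (g2 \<xi> - inner \<xi> G)"
  shows "f1 y - f2 y \<le> l * (g1 y - g2 y)"
    and "f1 y - f2 y = l * (g1 y - g2 y) \<Longrightarrow> nonlinear_eigen f1 f2 g1 g2 l y"
  using dca_step[OF conv(1,3,2) hom(1,2,4,3) \<open>0 \<le> l\<close> F G X, of y] min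
  by (simp_all add: dca_objective_def nonlinear_eigen_def)

lemma ratio_dca_step_neg:
  fixes f1 f2 g1 g2 :: "'a::euclidean_space \<Rightarrow> real"
  assumes conv: "convex_on UNIV f1" "convex_on UNIV g1" "convex_on UNIV g2"
    and hom: "pos_homogeneous f1" "pos_homogeneous f2" "pos_homogeneous g1" "pos_homogeneous g2"
    and "l < 0" and F: "F \<in> subdiff f2 X" and G: "G \<in> subdiff g2 X"
    and X: "norm X \<le> 1" "f1 X - f2 X = l * (g1 X - g2 X)"
    and min: "\<forall>\<xi>. norm \<xi> \<le> 1 \<longrightarrow>
      g1 y - inner y G + (1 / l) * (inner y F - f1 y)
        \<le> g1 \<xi> - inner \<xi> G + (1 / l) * (inner \<xi> F - f1 \<xi>)"
  shows "f1 y - f2 y \<le> l * (g1 y - g2 y)"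
    and "f1 y - f2 y = l * (g1 y - g2 y) \<Longrightarrow> nonlinear_eigen f1 f2 g1 g2 l y"
proof -
  have rescale: "dca_objective f1 g1 F G (- l) \<xi> =
      - l * (g1 \<xi> - inner \<xi> G + (1 / l) * (inner \<xi> F - f1 \<xi>))" for \<xi>
    using \<open>l < 0\<close> by (simp add: dca_objective_def algebra_simps)
  have min': "dca_objective f1 g1 F G (- l) y \<le> dca_objective f1 g1 F G (- l) \<xi>"
    if "norm \<xi> \<le> 1" for \<xi>
    unfolding rescale using min that \<open>l < 0\<close> by (intro mult_left_mono) auto
  have X': "f1 X - f2 X = - l * (g2 X - g1 X)" using X(2) by (simp add: algebra_simps)
  have "0 \<le> - l" using \<open>l < 0\<close> by simp
  note step = dca_step[OF conv(1,2,3) hom(1,2,3,4) \<open>0 \<le> - l\<close> F G X(1) X' min']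
  show "f1 y - f2 y \<le> l * (g1 y - g2 y)"
    using step(1) by (simp add: algebra_simps)
  show "nonlinear_eigen f1 f2 g1 g2 l y" if "f1 y - f2 y = l * (g1 y - g2 y)"
    using step(2) that unfolding nonlinear_eigen_def by (force simp: algebra_simps)
qed

lemma ratio_step_from_numerator:
  assumes "0 < g1 y - g2 y" and "f1 y - f2 y \<le> l * (g1 y - g2 y)"
    and "f1 y - f2 y = l * (g1 y - g2 y) \<Longrightarrow> nonlinear_eigen f1 f2 g1 g2 l y"
  shows "ratio f1 f2 g1 g2 y < l \<or>
    (ratio f1 f2 g1 g2 y = l \<and> nonlinear_eigen f1 f2 g1 g2 (ratio f1 f2 g1 g2 y) y)"
  using assms by (auto simp: ratio_def pos_divide_le_eq divide_eq_eq mult.commute less_le)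

theorem theorem4p1:
  fixes f1 f2 g1 g2 :: "'a::euclidean_space \<Rightarrow> real"
    and x F2 G1 G2 :: "nat \<Rightarrow> 'a"
  assumes conv: "convex_on UNIV f1" "convex_on UNIV f2" "convex_on UNIV g1" "convex_on UNIV g2"
    and hom: "pos_homogeneous f1" "pos_homogeneous f2" "pos_homogeneous g1" "pos_homogeneous g2"
    and denom_nonneg: "\<And>y. g1 y - g2 y \<ge> 0"
    and init: "norm (x 0) = 1"
    and F2: "\<And>k. F2 k \<in> subdiff f2 (x k)"
    and step_pos: "\<And>k. ratio f1 f2 g1 g2 (x k) \<ge> 0 \<Longrightarrow>
         G1 k \<in> subdiff g1 (x k) \<and> norm (x (Suc k)) \<le> 1 \<and>
         (\<forall>\<xi>. norm \<xi> \<le> 1 \<longrightarrow>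
            f1 (x (Suc k)) - inner (x (Suc k)) (F2 k)
              + ratio f1 f2 g1 g2 (x k) * (g2 (x (Suc k)) - inner (x (Suc k)) (G1 k))
            \<le> f1 \<xi> - inner \<xi> (F2 k) + ratio f1 f2 g1 g2 (x k) * (g2 \<xi> - inner \<xi> (G1 k)))"
    and step_neg: "\<And>k. ratio f1 f2 g1 g2 (x k) < 0 \<Longrightarrow>
         G2 k \<in> subdiff g2 (x k) \<and> norm (x (Suc k)) \<le> 1 \<and>
         (\<forall>\<xi>. norm \<xi> \<le> 1 \<longrightarrow>
            g1 (x (Suc k)) - inner (x (Suc k)) (G2 k)
              + (1 / ratio f1 f2 g1 g2 (x k)) * (inner (x (Suc k)) (F2 k) - f1 (x (Suc k)))
            \<le> g1 \<xi> - inner \<xi> (G2 k) + (1 / ratio f1 f2 g1 g2 (x k)) * (inner \<xi> (F2 k) - f1 \<xi>))"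
    and well_def: "\<And>k. g1 (x k) - g2 (x k) > 0"
  shows "\<forall>k. ratio f1 f2 g1 g2 (x (Suc k)) < ratio f1 f2 g1 g2 (x k) \<or>
             (ratio f1 f2 g1 g2 (x (Suc k)) = ratio f1 f2 g1 g2 (x k) \<and>
              nonlinear_eigen f1 f2 g1 g2 (ratio f1 f2 g1 g2 (x (Suc k))) (x (Suc k)))"
proof (intro allI)
  fix k
  define l where "l = ratio f1 f2 g1 g2 (x k)"
  have ball: "norm (x k) \<le> 1"
  proof (cases k)
    case (Suc j)
    then show ?thesis
      using step_pos[of j] step_neg[of j] by (cases "ratio f1 f2 g1 g2 (x j) \<ge> 0") auto
  qed (simp add: init)
  have anchor: "f1 (x k) - f2 (x k) = l * (g1 (x k) - g2 (x k))"
    using well_def[of k] by (simp add: l_def ratio_def)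
  let ?y = "x (Suc k)"
  have "f1 ?y - f2 ?y \<le> l * (g1 ?y - g2 ?y) \<and>
    (f1 ?y - f2 ?y = l * (g1 ?y - g2 ?y) \<longrightarrow> nonlinear_eigen f1 f2 g1 g2 l ?y)"
  proof (cases "0 \<le> l")
    case True
    then show ?thesis
      using step_pos[of k, folded l_def] ratio_dca_step_nonneg[OF conv(1,3,4) hom True F2 _ ball anchor,
          where G = "G1 k" and y = ?y] by blast
  next
    case False
    then have "l < 0" by simp
    then show ?thesis
      using step_neg[of k, folded l_def] ratio_dca_step_neg[OF conv(1,3,4) hom _ F2 _ ball anchor,
          where G = "G2 k" and y = ?y] by blast
  qed
  then show "ratio f1 f2 g1 g2 (x (Suc k)) < ratio f1 f2 g1 g2 (x k) \<or>
      (ratio f1 f2 g1 g2 (x (Suc k)) = ratio f1 f2 g1 g2 (x k) \<and>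
       nonlinear_eigen f1 f2 g1 g2 (ratio f1 f2 g1 g2 (x (Suc k))) (x (Suc k)))"
    using ratio_step_from_numerator[of g1 ?y g2 f1 f2 l] well_def by (simp add: l_def)
qed

end
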